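(* Let $A$ be a finite set and let $C, D \subseteq O_A$ be total clones with $D \subseteq C$ such that for some $a\in A$ the constant function $c_a$ (of some arity) belongs to $C$ but not to $D$. Then $|\mathcal{I}_{\mathrm{str}}(D)| \geq |\mathcal{I}_{\mathrm{str}}(C)|$.
   Context: A partial function of arity $n$ on $A$ is a map $f:\operatorname{dom} f\to A$ with $\operatorname{dom} f\subseteq A^n$; it is total if $\operatorname{dom} f=A^n$. $P_A$ is the set of all partial functions on $A$, $O_A$ the set of total ones. Composition $F=f(g_1,\dots,g_n)$ ($f$ $n$-ary, $g_i$ $m$-ary) is given by $F(\mathbf{x})=f(g_1(\mathbf{x}),\dots,g_n(\mathbf{x}))$ on $\operatorname{dom} F=\{\mathbf{x}\in\bigcap_i\operatorname{dom} g_i : (g_1(\mathbf{x}),\dots,g_n(\mathbf{x}))\in\operatorname{dom} f\}$. A partial clone is a composition-closed subset of $P_A$ containing all projections; a total clone is one contained in $O_A$. A partial clone $X$ is strong if whenever $g\in X$ and $f$ is a restriction of $g$ ($\operatorname{dom} f\subseteq\operatorname{dom} g$, $f=g$ on $\operatorname{dom} f$) then $f\in X$. For a total clone $C$, $\mathcal{I}_{\mathrm{str}}(C)$ is the set of all strong partial clones $X\subseteq P_A$ with $X\cap O_A=C$. $c_a$ denotes the constant total function with value $a$. *)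

theory Defs
  imports Main
begin

text \<open>A partial function of arity n on the carrier (the finite type 'a) is a pair
  (n, F) with F :: 'a list => 'a option; F xs = None means xs is not in the domain.\<close>

type_synonym 'a pfun = "nat \<times> ('a list \<Rightarrow> 'a option)"

definition arity :: "'a pfun \<Rightarrow> nat" where "arity f = fst f"
definition app :: "'a pfun \<Rightarrow> 'a list \<Rightarrow> 'a option" where "app f = snd f"

definition P_A :: "'a pfun set" where
  "P_A = {f. arity f \<ge> 1 \<and> (\<forall>xs. length xs \<noteq> arity f \<longrightarrow> app f xs = None)}"

definition O_A :: "'a pfun set" where
  "O_A = {f. f \<in> P_A \<and> (\<forall>xs. length xs = arity f \<longrightarrow> app f xs \<noteq> None)}"

definition proj :: "nat \<Rightarrow> nat \<Rightarrow> 'a pfun" where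
  "proj n i = (n, \<lambda>xs. if length xs = n then Some (xs ! i) else None)"

definition constf :: "nat \<Rightarrow> 'a \<Rightarrow> 'a pfun" where
  "constf n a = (n, \<lambda>xs. if length xs = n then Some a else None)"

definition comp_pf :: "'a pfun \<Rightarrow> 'a pfun list \<Rightarrow> nat \<Rightarrow> 'a pfun" where
  "comp_pf f gs m = (m, \<lambda>xs. if length xs = m \<and> (\<forall>g\<in>set gs. app g xs \<noteq> None)
      then app f (map (\<lambda>g. the (app g xs)) gs) else None)"

definition partial_clone :: "'a pfun set \<Rightarrow> bool" where
  "partial_clone X \<longleftrightarrow> X \<subseteq> P_A
    \<and> (\<forall>n i. 1 \<le> n \<and> i < n \<longrightarrow> proj n i \<in> X)
    \<and> (\<forall>f gs m. f \<in> X \<and> set gs \<subseteq> X \<and> length gs = arity f \<and> 1 \<le> m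
          \<and> (\<forall>g\<in>set gs. arity g = m) \<longrightarrow> comp_pf f gs m \<in> X)"

definition total_clone :: "'a pfun set \<Rightarrow> bool" where
  "total_clone C \<longleftrightarrow> partial_clone C \<and> C \<subseteq> O_A"

definition restriction_of :: "'a pfun \<Rightarrow> 'a pfun \<Rightarrow> bool" where
  "restriction_of f g \<longleftrightarrow> arity f = arity g \<and>
     (\<forall>xs. app f xs \<noteq> None \<longrightarrow> app f xs = app g xs)"

definition strong_partial_clone :: "'a pfun set \<Rightarrow> bool" where
  "strong_partial_clone X \<longleftrightarrow> partial_clone X \<and>
     (\<forall>f g. g \<in> X \<and> f \<in> P_A \<and> restriction_of f g \<longrightarrow> f \<in> X)"

definition I_str :: "'a pfun set \<Rightarrow> 'a pfun set set" where
  "I_str C = {X. strong_partial_clone X \<and> X \<inter> O_A = C}"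

end

theory Submission
  imports Defs
begin

text \<open>For a strong partial clone X with total part C, let Y_D(X) consist of those f \<in> X such that
  every total composition of f with functions from D lies in D. Then Y_D(X) is a strong partial
  clone with total part D. The map X \<mapsto> Y_D(X) is injective on I_str(C) because of the constant
  c_a \<in> C - D: for f \<in> X, the function f'(x, y) = f(x), defined only for y = a, is a restriction
  of a function of X and lies in Y_D(X) vacuously (a total composition of f' with functions from D
  forces c_a \<in> D); conversely f = f'(x, c_a(x)) is recovered inside any clone containing C.\<close>

declare split_paired_All [simp del] split_paired_Ex [simp del]

lemma arity_proj [simp]: "arity (proj n i) = n"
  by (simp add: arity_def proj_def)

lemma app_proj: "app (proj n i) xs = (if length xs = n then Some (xs ! i) else None)"
  by (simp add: app_def proj_def)

lemma arity_constf [simp]: "arity (constf n a) = n"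
  by (simp add: arity_def constf_def)

lemma app_constf: "app (constf n a) xs = (if length xs = n then Some a else None)"
  by (simp add: app_def constf_def)

lemma arity_comp_pf [simp]: "arity (comp_pf f gs m) = m"
  by (simp add: arity_def comp_pf_def)

lemma app_comp_pf: "app (comp_pf f gs m) xs =
    (if length xs = m \<and> (\<forall>g\<in>set gs. app g xs \<noteq> None)
     then app f (map (\<lambda>g. the (app g xs)) gs) else None)"
  by (simp add: app_def comp_pf_def)

lemma app_comp_pf_defined_args:
  "app (comp_pf f gs m) xs \<noteq> None \<Longrightarrow> \<forall>g\<in>set gs. app g xs \<noteq> None"
  by (simp add: app_comp_pf split: if_splits)

lemma pfun_eqI: "arity f = arity g \<Longrightarrow> (\<And>xs. app f xs = app g xs) \<Longrightarrow> f = g"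
  by (cases f, cases g) (auto simp: arity_def app_def)

lemma app_P_A_wrong_length: "f \<in> P_A \<Longrightarrow> length xs \<noteq> arity f \<Longrightarrow> app f xs = None"
  by (simp add: P_A_def)

lemma comp_pf_in_O_A_iff:
  "comp_pf f gs m \<in> O_A \<longleftrightarrow> 1 \<le> m \<and> (\<forall>xs. length xs = m \<longrightarrow> app (comp_pf f gs m) xs \<noteq> None)"
  by (auto simp: O_A_def P_A_def app_comp_pf)

lemma comp_pf_assoc:
  assumes "hs \<noteq> []" and "length gs = k"
  shows "comp_pf (comp_pf f hs k) gs m = comp_pf f (map (\<lambda>h. comp_pf h gs m) hs) m"
proof (rule pfun_eqI)
  fix xs
  show "app (comp_pf (comp_pf f hs k) gs m) xs = app (comp_pf f (map (\<lambda>h. comp_pf h gs m) hs) m) xs"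
  proof (cases "length xs = m \<and> (\<forall>g\<in>set gs. app g xs \<noteq> None)")
    case True
    let ?ys = "map (\<lambda>g. the (app g xs)) gs"
    have inner: "app (comp_pf h gs m) xs = app h ?ys" for h
      using True by (simp add: app_comp_pf)
    show ?thesis
      using True assms(2) by (auto simp: app_comp_pf[of f] app_comp_pf[of "comp_pf f hs k"] inner o_def)
  next
    case False
    then have inner: "app (comp_pf h gs m) xs = None" for h
      by (auto simp: app_comp_pf)
    obtain h0 where "h0 \<in> set hs" using assms(1) by (cases hs) auto
    then have "app (comp_pf f (map (\<lambda>h. comp_pf h gs m) hs) m) xs = None"
      unfolding app_comp_pf[of f] using inner by auto
    moreover have "app (comp_pf (comp_pf f hs k) gs m) xs = None"
      using False unfolding app_comp_pf[of "comp_pf f hs k"] by auto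
    ultimately show ?thesis by simp
  qed
qed simp

lemma proj_comp_pf:
  assumes "set gs \<subseteq> O_A" and "\<forall>g\<in>set gs. arity g = m" and "i < n" and "length gs = n"
  shows "comp_pf (proj n i) gs m = gs ! i"
proof (rule pfun_eqI)
  have gi: "gs ! i \<in> O_A" "arity (gs ! i) = m" using assms nth_mem by blast+
  then show "arity (comp_pf (proj n i) gs m) = arity (gs ! i)" by simp
  fix xs
  show "app (comp_pf (proj n i) gs m) xs = app (gs ! i) xs"
  proof (cases "length xs = m")
    case True
    then have "\<forall>g\<in>set gs. app g xs \<noteq> None" using assms by (auto simp: O_A_def)
    then show ?thesis using True assms by (simp add: app_comp_pf app_proj)
  next
    case False
    then show ?thesis using gi by (auto simp: app_comp_pf O_A_def P_A_def)
  qed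
qed

lemma comp_pf_projs:
  assumes "f \<in> P_A"
  shows "comp_pf f (map (proj (arity f)) [0..<arity f]) (arity f) = f"
proof (rule pfun_eqI)
  fix xs
  show "app (comp_pf f (map (proj (arity f)) [0..<arity f]) (arity f)) xs = app f xs"
  proof (cases "length xs = arity f")
    case True
    then have "map (\<lambda>i. xs ! i) [0..<arity f] = xs" using map_nth[of xs] by simp
    then show ?thesis using True by (simp add: app_comp_pf app_proj o_def)
  next
    case False
    then show ?thesis using assms by (simp add: app_comp_pf app_P_A_wrong_length)
  qed
qed simp

lemma constf_comp_pf: "comp_pf (constf m a) (replicate m (proj n 0)) n = constf n a"
  by (rule pfun_eqI) (auto simp: app_comp_pf app_constf app_proj)

text \<open>A total composition only evaluates f at points of its domain, so it cannot tell f from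
  any function of which f is a restriction.\<close>

lemma total_comp_pf_restriction:
  assumes "restriction_of f g" and "comp_pf f gs m \<in> O_A"
  shows "comp_pf f gs m = comp_pf g gs m"
proof (rule pfun_eqI)
  fix xs
  show "app (comp_pf f gs m) xs = app (comp_pf g gs m) xs"
  proof (cases "length xs = m")
    case True
    then have defd: "app (comp_pf f gs m) xs \<noteq> None"
      using assms(2) by (simp add: comp_pf_in_O_A_iff)
    then have "\<forall>g\<in>set gs. app g xs \<noteq> None" by (rule app_comp_pf_defined_args)
    then show ?thesis
      using True defd assms(1) by (simp add: app_comp_pf restriction_of_def)
  next
    case False
    then show ?thesis by (simp add: app_comp_pf)
  qed
qed simp

lemma partial_cloneI:
  assumes "X \<subseteq> P_A"
    and "\<And>n i. 1 \<le> n \<Longrightarrow> i < n \<Longrightarrow> proj n i \<in> X"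
    and "\<And>f gs m. f \<in> X \<Longrightarrow> set gs \<subseteq> X \<Longrightarrow> length gs = arity f \<Longrightarrow> 1 \<le> m
          \<Longrightarrow> \<forall>g\<in>set gs. arity g = m \<Longrightarrow> comp_pf f gs m \<in> X"
  shows "partial_clone X"
  using assms unfolding partial_clone_def by blast

lemma partial_clone_subset_P_A: "partial_clone X \<Longrightarrow> X \<subseteq> P_A"
  by (simp add: partial_clone_def)

lemma partial_clone_proj: "partial_clone X \<Longrightarrow> 1 \<le> n \<Longrightarrow> i < n \<Longrightarrow> proj n i \<in> X"
  by (simp add: partial_clone_def)

lemma partial_clone_projs:
  "partial_clone X \<Longrightarrow> 1 \<le> n \<Longrightarrow> k \<le> n \<Longrightarrow> set (map (proj n) [0..<k]) \<subseteq> X"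
  by (auto simp: partial_clone_def)

lemma partial_clone_comp_pf:
  "partial_clone X \<Longrightarrow> f \<in> X \<Longrightarrow> set gs \<subseteq> X \<Longrightarrow> length gs = arity f \<Longrightarrow> 1 \<le> m
    \<Longrightarrow> \<forall>g\<in>set gs. arity g = m \<Longrightarrow> comp_pf f gs m \<in> X"
  unfolding partial_clone_def by blast

lemma strong_partial_clone_restriction:
  "strong_partial_clone X \<Longrightarrow> g \<in> X \<Longrightarrow> f \<in> P_A \<Longrightarrow> restriction_of f g \<Longrightarrow> f \<in> X"
  unfolding strong_partial_clone_def by blast

lemma partial_clone_constf:
  assumes "partial_clone X" and "constf k a \<in> X" and "1 \<le> n"
  shows "constf n a \<in> X"
proof -
  have "set (replicate k (proj n 0)) \<subseteq> X"
    using partial_clone_proj[OF assms(1,3)] assms(3) by auto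
  then have "comp_pf (constf k a) (replicate k (proj n 0)) n \<in> X"
    using assms by (intro partial_clone_comp_pf) auto
  then show ?thesis by (simp add: constf_comp_pf)
qed

subsection \<open>The D-stable part of a partial clone\<close>

definition stable_part :: "'a pfun set \<Rightarrow> 'a pfun set \<Rightarrow> 'a pfun set" where
  "stable_part D X = {f \<in> X. \<forall>gs m. set gs \<subseteq> D \<and> length gs = arity f \<and> 1 \<le> m
     \<and> (\<forall>g\<in>set gs. arity g = m) \<and> comp_pf f gs m \<in> O_A \<longrightarrow> comp_pf f gs m \<in> D}"

lemma stable_partI:
  assumes "f \<in> X"
    and "\<And>gs m. set gs \<subseteq> D \<Longrightarrow> length gs = arity f \<Longrightarrow> 1 \<le> m
          \<Longrightarrow> \<forall>g\<in>set gs. arity g = m \<Longrightarrow> comp_pf f gs m \<in> O_A \<Longrightarrow> comp_pf f gs m \<in> D"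
  shows "f \<in> stable_part D X"
  using assms unfolding stable_part_def by blast

lemma stable_partD:
  "f \<in> stable_part D X \<Longrightarrow> set gs \<subseteq> D \<Longrightarrow> length gs = arity f \<Longrightarrow> 1 \<le> m
    \<Longrightarrow> \<forall>g\<in>set gs. arity g = m \<Longrightarrow> comp_pf f gs m \<in> O_A \<Longrightarrow> comp_pf f gs m \<in> D"
  unfolding stable_part_def by blast

lemma stable_part_subset: "stable_part D X \<subseteq> X"
  unfolding stable_part_def by blast

lemma proj_in_stable_part:
  assumes "D \<subseteq> O_A" and "proj n i \<in> X" and "i < n"
  shows "proj n i \<in> stable_part D X"
proof (rule stable_partI[OF assms(2)])
  fix gs m assume gs: "set gs \<subseteq> D" "length gs = arity (proj n i)" "\<forall>g\<in>set gs. arity g = m"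
  then have "comp_pf (proj n i) gs m = gs ! i"
    using assms by (intro proj_comp_pf) auto
  then show "comp_pf (proj n i) gs m \<in> D"
    using gs assms(3) nth_mem by fastforce
qed

text \<open>If a total composition (f \<circ> hs) \<circ> gs = f \<circ> (hs \<circ> gs) is total, so is every h \<circ> gs;
  stability of the h then puts hs \<circ> gs into D, and stability of f finishes.\<close>

lemma comp_pf_in_stable_part:
  assumes X: "partial_clone X" and f: "f \<in> stable_part D X" and hs: "set hs \<subseteq> stable_part D X"
    and len: "length hs = arity f" and k: "1 \<le> k" and ar: "\<forall>h\<in>set hs. arity h = k"
  shows "comp_pf f hs k \<in> stable_part D X"
proof (rule stable_partI)
  show "comp_pf f hs k \<in> X"
    using partial_clone_comp_pf[OF X _ _ len k ar] f hs stable_part_subset by blast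
  have "f \<in> P_A" using f stable_part_subset partial_clone_subset_P_A[OF X] by blast
  then have hs_ne: "hs \<noteq> []" using len by (auto simp: P_A_def)
  fix gs m assume gs: "set gs \<subseteq> D" "length gs = arity (comp_pf f hs k)" "1 \<le> m"
    "\<forall>g\<in>set gs. arity g = m" "comp_pf (comp_pf f hs k) gs m \<in> O_A"
  let ?hgs = "map (\<lambda>h. comp_pf h gs m) hs"
  have assoc: "comp_pf (comp_pf f hs k) gs m = comp_pf f ?hgs m"
    using gs(2) by (intro comp_pf_assoc[OF hs_ne]) simp
  have total: "app (comp_pf f ?hgs m) xs \<noteq> None" if "length xs = m" for xs
    using gs(5) that by (simp add: assoc comp_pf_in_O_A_iff)
  have "comp_pf h gs m \<in> D" if h: "h \<in> set hs" for h
  proof -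
    have "comp_pf h gs m \<in> O_A"
      using gs(3) h app_comp_pf_defined_args[OF total] by (auto simp: comp_pf_in_O_A_iff)
    then show ?thesis
      using stable_partD[of h D X gs m] h hs gs ar by auto
  qed
  then have "set ?hgs \<subseteq> D" by auto
  then have "comp_pf f ?hgs m \<in> D"
    using stable_partD[OF f, of ?hgs m] len gs(3,5) assoc by auto
  then show "comp_pf (comp_pf f hs k) gs m \<in> D" by (simp add: assoc)
qed

lemma stable_part_partial_clone:
  assumes "partial_clone X" and "D \<subseteq> O_A"
  shows "partial_clone (stable_part D X)"
proof (rule partial_cloneI)
  show "stable_part D X \<subseteq> P_A"
    using stable_part_subset partial_clone_subset_P_A[OF assms(1)] by blast
  show "proj n i \<in> stable_part D X" if "1 \<le> n" "i < n" for n i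
    using that assms by (intro proj_in_stable_part partial_clone_proj)
qed (rule comp_pf_in_stable_part[OF assms(1)])

lemma stable_part_restriction:
  assumes X: "strong_partial_clone X" and g: "g \<in> stable_part D X"
    and f: "f \<in> P_A" and r: "restriction_of f g"
  shows "f \<in> stable_part D X"
proof (rule stable_partI)
  show "f \<in> X"
    using strong_partial_clone_restriction[OF X _ f r] g stable_part_subset by blast
  fix gs m assume gs: "set gs \<subseteq> D" "length gs = arity f" "1 \<le> m"
    "\<forall>g\<in>set gs. arity g = m" "comp_pf f gs m \<in> O_A"
  have "comp_pf f gs m = comp_pf g gs m" by (rule total_comp_pf_restriction[OF r gs(5)])
  moreover have "arity f = arity g" using r by (simp add: restriction_of_def)
  ultimately show "comp_pf f gs m \<in> D"
    using stable_partD[OF g gs(1) _ gs(3,4)] gs(2,5) by simp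
qed

lemma stable_part_strong_partial_clone:
  assumes "strong_partial_clone X" and "D \<subseteq> O_A"
  shows "strong_partial_clone (stable_part D X)"
  using assms stable_part_partial_clone stable_part_restriction
  unfolding strong_partial_clone_def by blast

lemma stable_part_inter_O_A:
  assumes D: "total_clone D" and DX: "D \<subseteq> X"
  shows "stable_part D X \<inter> O_A = D"
proof
  have Dp: "partial_clone D" and DO: "D \<subseteq> O_A" using D by (auto simp: total_clone_def)
  show "stable_part D X \<inter> O_A \<subseteq> D"
  proof
    fix f assume f: "f \<in> stable_part D X \<inter> O_A"
    let ?n = "arity f"
    have fP: "f \<in> P_A" using f by (auto simp: O_A_def)
    then have n: "1 \<le> ?n" by (simp add: P_A_def)
    have "comp_pf f (map (proj ?n) [0..<?n]) ?n \<in> D"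
      using f n partial_clone_projs[OF Dp n order_refl] comp_pf_projs[OF fP]
      by (intro stable_partD[of f D X]) auto
    then show "f \<in> D" by (simp add: comp_pf_projs[OF fP])
  qed
  show "D \<subseteq> stable_part D X \<inter> O_A"
    using DX DO partial_clone_comp_pf[OF Dp] by (auto intro: stable_partI)
qed

lemma stable_part_I_str:
  assumes "total_clone D" and "D \<subseteq> C" and "X \<in> I_str C"
  shows "stable_part D X \<in> I_str D"
proof -
  have "strong_partial_clone X" and "D \<subseteq> X" using assms(2,3) by (auto simp: I_str_def)
  moreover have "D \<subseteq> O_A" using assms(1) by (simp add: total_clone_def)
  ultimately show ?thesis
    using stable_part_strong_partial_clone stable_part_inter_O_A[OF assms(1)]
    by (simp add: I_str_def)
qed

subsection \<open>Guarding the last argument by a constant\<close>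

definition guard_last :: "'a \<Rightarrow> 'a pfun \<Rightarrow> 'a pfun" where
  "guard_last a f = (arity f + 1,
     \<lambda>xs. if length xs = arity f + 1 \<and> last xs = a then app f (butlast xs) else None)"

lemma arity_guard_last [simp]: "arity (guard_last a f) = arity f + 1"
  by (simp add: guard_last_def arity_def)

lemma app_guard_last: "app (guard_last a f) xs =
    (if length xs = arity f + 1 \<and> last xs = a then app f (butlast xs) else None)"
  by (simp add: guard_last_def app_def)

lemma guard_last_in_strong_partial_clone:
  assumes X: "strong_partial_clone X" and f: "f \<in> X"
  shows "guard_last a f \<in> X"
proof -
  let ?n = "arity f"
  let ?f' = "comp_pf f (map (proj (?n + 1)) [0..<?n]) (?n + 1)"
  have Xp: "partial_clone X" using X by (simp add: strong_partial_clone_def)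
  have "?f' \<in> X"
    using partial_clone_comp_pf[OF Xp f] partial_clone_projs[OF Xp] by auto
  moreover have "guard_last a f \<in> P_A" by (auto simp: P_A_def app_guard_last)
  moreover have "restriction_of (guard_last a f) ?f'"
  proof -
    have "app ?f' xs = app f (butlast xs)" if "length xs = ?n + 1" for xs
    proof -
      have "map (\<lambda>i. xs ! i) [0..<?n] = butlast xs"
        using that by (intro nth_equalityI) (auto simp: nth_butlast)
      then show ?thesis using that by (simp add: app_comp_pf app_proj o_def)
    qed
    then show ?thesis by (auto simp: restriction_of_def app_guard_last)
  qed
  ultimately show ?thesis by (rule strong_partial_clone_restriction[OF X])
qed

lemma mem_if_guard_last_mem:
  assumes X: "partial_clone X" and c: "constf (arity f) a \<in> X" and f: "f \<in> P_A"
    and g: "guard_last a f \<in> X"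
  shows "f \<in> X"
proof -
  let ?n = "arity f"
  let ?gs = "map (proj ?n) [0..<?n] @ [constf ?n a]"
  have n: "1 \<le> ?n" using f by (simp add: P_A_def)
  have "comp_pf (guard_last a f) ?gs ?n \<in> X"
    using partial_clone_comp_pf[OF X g] partial_clone_projs[OF X n order_refl] c n by auto
  moreover have "comp_pf (guard_last a f) ?gs ?n = f"
  proof (rule pfun_eqI)
    fix xs
    show "app (comp_pf (guard_last a f) ?gs ?n) xs = app f xs"
    proof (cases "length xs = ?n")
      case True
      then have "map (\<lambda>g. the (app g xs)) ?gs = xs @ [a]"
        using map_nth[of xs] by (simp add: app_proj app_constf o_def)
      then show ?thesis
        using True by (simp add: app_comp_pf app_proj app_constf app_guard_last)
    next
      case False
      then show ?thesis using f by (simp add: app_comp_pf app_P_A_wrong_length)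
    qed
  qed simp
  ultimately show ?thesis by simp
qed

text \<open>The last argument of a total composition of guard_last a f must be the constant c_a,
  so a clone of total functions without c_a makes the stability condition vacuous.\<close>

lemma guard_last_in_stable_part:
  assumes g: "guard_last a f \<in> X" and D: "D \<subseteq> O_A" and no_const: "\<forall>m\<ge>1. constf m a \<notin> D"
  shows "guard_last a f \<in> stable_part D X"
proof (rule stable_partI[OF g])
  fix gs m assume gs: "set gs \<subseteq> D" "length gs = arity (guard_last a f)" "1 \<le> m"
    "\<forall>g\<in>set gs. arity g = m" "comp_pf (guard_last a f) gs m \<in> O_A"
  have ne: "gs \<noteq> []" using gs(2) by auto
  let ?g = "last gs"
  have gD: "?g \<in> D" and ga: "arity ?g = m" using ne gs(1,4) last_in_set by blast+
  have "?g = constf m a"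
  proof (rule pfun_eqI)
    fix xs
    show "app ?g xs = app (constf m a) xs"
    proof (cases "length xs = m")
      case True
      then have defd: "app (comp_pf (guard_last a f) gs m) xs \<noteq> None"
        using gs(5) by (simp add: comp_pf_in_O_A_iff)
      then have args: "\<forall>g\<in>set gs. app g xs \<noteq> None" by (rule app_comp_pf_defined_args)
      then have "last (map (\<lambda>g. the (app g xs)) gs) = a"
        using defd True by (simp add: app_comp_pf app_guard_last split: if_splits)
      then show ?thesis
        using True args ne by (auto simp: last_map app_constf)
    next
      case False
      then show ?thesis
        using gD D ga by (auto simp: app_constf O_A_def app_P_A_wrong_length)
    qed
  qed (simp add: ga)
  then show "comp_pf (guard_last a f) gs m \<in> D"
    using gD no_const gs(3) by auto
qed

lemma stable_part_inj_on_I_str: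
  assumes D: "D \<subseteq> O_A"
    and in_C: "\<forall>m\<ge>1. constf m a \<in> C" and not_in_D: "\<forall>m\<ge>1. constf m a \<notin> D"
  shows "inj_on (stable_part D) (I_str C)"
proof -
  have "X1 \<subseteq> X2" if X1: "X1 \<in> I_str C" and X2: "X2 \<in> I_str C"
    and eq: "stable_part D X1 = stable_part D X2" for X1 X2
  proof
    fix f assume f: "f \<in> X1"
    have s1: "strong_partial_clone X1" using X1 by (simp add: I_str_def)
    have p2: "partial_clone X2" and C2: "X2 \<inter> O_A = C"
      using X2 by (auto simp: I_str_def strong_partial_clone_def)
    have fP: "f \<in> P_A" using s1 f by (auto simp: strong_partial_clone_def partial_clone_def)
    have "guard_last a f \<in> stable_part D X1"
      by (rule guard_last_in_stable_part[OF guard_last_in_strong_partial_clone[OF s1 f] D not_in_D])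
    then have "guard_last a f \<in> X2" using eq stable_part_subset by blast
    moreover have "constf (arity f) a \<in> X2" using in_C fP C2 by (auto simp: P_A_def)
    ultimately show "f \<in> X2" using mem_if_guard_last_mem[OF p2 _ fP] by blast
  qed
  then show ?thesis by (metis inj_onI subset_antisym)
qed

theorem mainTheorem10:
  fixes C D :: "('a::finite) pfun set"
  assumes "total_clone C" and "total_clone D" and "D \<subseteq> C"
    and "\<exists>a n. 1 \<le> n \<and> constf n a \<in> C \<and> constf n a \<notin> D"
  shows "\<exists>h. inj_on h (I_str C) \<and> h ` I_str C \<subseteq> I_str D"
proof -
  obtain a n where a: "1 \<le> n" "constf n a \<in> C" "constf n a \<notin> D" using assms(4) by blast
  have C: "partial_clone C" and D: "partial_clone D" "D \<subseteq> O_A"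
    using assms(1,2) by (auto simp: total_clone_def)
  have "\<forall>m\<ge>1. constf m a \<in> C" using partial_clone_constf[OF C a(2)] by blast
  moreover have "\<forall>m\<ge>1. constf m a \<notin> D" using partial_clone_constf[OF D(1) _ a(1)] a(3) by blast
  ultimately have "inj_on (stable_part D) (I_str C)"
    using stable_part_inj_on_I_str[OF D(2)] by blast
  moreover have "stable_part D ` I_str C \<subseteq> I_str D"
    using stable_part_I_str[OF assms(2,3)] by blast
  ultimately show ?thesis by blast
qed

end
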